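(* (i) With $a=1$, $\boldsymbol{\alpha}_0=\boldsymbol{\beta}_0=1$ and for $n\ge1$ \[ \boldsymbol{\alpha}_n(1,k)=q^{-n}-q^{n},\qquad \boldsymbol{\beta}_n(1,k)=\frac{(k,k;q)_{n}(1-2kq^n+kq^{2n})}{(1-k)q^{n}(q,q;q)_n}, \] the pair $(\boldsymbol{\alpha}_n,\boldsymbol{\beta}_n)$ is a WP-Bailey pair relative to $a=1$. (ii) With $a=q$, $\boldsymbol{\alpha}_0=\boldsymbol{\beta}_0=1$ and for $n\ge1$ \[ \boldsymbol{\alpha}_n(q,k)=q^{-n}-q^{n+1},\qquad \boldsymbol{\beta}_n(q,k)=\frac{(k;q)_{n}(k;q)_{n-1}(1-kq^{n-1}-kq^n+kq^{2n})}{q^n(q,q^2;q)_n}, \] the pair $(\boldsymbol{\alpha}_n,\boldsymbol{\beta}_n)$ is a WP-Bailey pair relative to $a=q$.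
   Context: Notation: $(x;q)_n=\prod_{i=0}^{n-1}(1-xq^i)$, $(x_1,\dots,x_j;q)_n=(x_1;q)_n\cdots(x_j;q)_n$. A pair of sequences $(\boldsymbol{\alpha}_n(a,k,q),\boldsymbol{\beta}_n(a,k,q))_{n\ge0}$ is a WP-Bailey pair (relative to $a$, with parameter $k$) if $\boldsymbol{\alpha}_0=1$ and for all $n\ge0$ \[\boldsymbol{\beta}_n=\sum_{j=0}^n\frac{(k/a;q)_{n-j}(k;q)_{n+j}}{(q;q)_{n-j}(aq;q)_{n+j}}\boldsymbol{\alpha}_j.\] $k\neq1$ and parameters generic. *)

theory Defs
  imports Complex_Main
begin

definition qpoch :: "complex \<Rightarrow> complex \<Rightarrow> nat \<Rightarrow> complex" where
  "qpoch x q n = (\<Prod>i<n. 1 - x * q ^ i)"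

definition wp_bailey_pair ::
  "complex \<Rightarrow> complex \<Rightarrow> complex \<Rightarrow> (nat \<Rightarrow> complex) \<Rightarrow> (nat \<Rightarrow> complex) \<Rightarrow> bool" where
  "wp_bailey_pair a k q \<alpha> \<beta> \<longleftrightarrow>
     \<alpha> 0 = 1 \<and>
     (\<forall>n. \<beta> n = (\<Sum>j\<le>n. qpoch (k / a) q (n - j) * qpoch k q (n + j)
                          / (qpoch q q (n - j) * qpoch (a * q) q (n + j)) * \<alpha> j))"

end

theory Submission
  imports Defs
begin

text \<open>
  Both pairs are instances of one computation for general \<open>a\<close>: with \<open>b = k/a\<close>, the
  \<open>\<beta>\<close>-sum of \<open>\<alpha>\<^sub>j = q\<^sup>-\<^sup>j - a q\<^sup>j\<close> (\<open>j \<ge> 1\<close>) telescopes. Multiplied by \<open>q\<^sup>n\<close>, its tail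
  from \<open>j + 1\<close> on is the explicit term \<open>wp_tail a k q n j\<close>; the difference of consecutive
  tails reduces to the polynomial identity
  \<open>(1 - b x)(1 - a y) - (1 - x)(1 - k y) = (1 - b)(x - a y)\<close> with \<open>x = q\<^sup>n\<^sup>-\<^sup>j\<^sup>-\<^sup>1\<close>,
  \<open>y = q\<^sup>n\<^sup>+\<^sup>j\<^sup>+\<^sup>1\<close>. This yields a closed form for every \<open>\<beta>\<^sub>n\<close>, which for \<open>a = 1\<close> and
  \<open>a = q\<close> simplifies to the stated expressions.
\<close>

lemma qpoch_0 [simp]: "qpoch x q 0 = 1"
  by (simp add: qpoch_def)

lemma qpoch_Suc: "qpoch x q (Suc n) = qpoch x q n * (1 - x * q ^ n)"
  by (simp add: qpoch_def)

lemma qpoch_Suc_shift: "qpoch x q (Suc n) = (1 - x) * qpoch (x * q) q n"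
  by (induction n) (simp_all add: qpoch_Suc mult_ac)

lemma qpoch_shift_pred: "n \<ge> 1 \<Longrightarrow> qpoch x q n = (1 - x) * qpoch (x * q) q (n - 1)"
  by (cases n) (simp_all add: qpoch_Suc_shift)

lemma qpoch_power_nonzero:
  assumes "\<And>m::nat. m \<ge> 1 \<Longrightarrow> q ^ m \<noteq> 1" and "e \<ge> 1"
  shows "qpoch (q ^ e) q n \<noteq> 0"
  using assms by (auto simp: qpoch_def power_add [symmetric])

definition wp_coeff :: "complex \<Rightarrow> complex \<Rightarrow> complex \<Rightarrow> nat \<Rightarrow> nat \<Rightarrow> complex" where
  "wp_coeff a k q n j = qpoch (k / a) q (n - j) * qpoch k q (n + j)
                         / (qpoch q q (n - j) * qpoch (a * q) q (n + j))"

definition wp_tail :: "complex \<Rightarrow> complex \<Rightarrow> complex \<Rightarrow> nat \<Rightarrow> nat \<Rightarrow> complex" where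
  "wp_tail a k q n j = qpoch (k / a * q) q (n - j - 1) * qpoch k q (n + j)
                        * (1 - k * q ^ (n + j)) * (1 - q ^ (n - j))
                        / (qpoch q q (n - j) * qpoch (a * q) q (n + j))"

lemma wp_tail_top [simp]: "wp_tail a k q n n = 0"
  by (simp add: wp_tail_def)

lemma qpoch_tail_identity:
  fixes a b k y :: complex
  assumes "a * b = k"
  shows "qpoch (b * q) q s * (1 - a * y) - qpoch (b * q) q (s - 1) * (1 - q ^ s) * (1 - k * y)
         = qpoch b q s * (q ^ s - a * y)"
proof (cases s)
  case (Suc r)
  have key: "(1 - b * q ^ s) * (1 - a * y) - (1 - q ^ s) * (1 - k * y) = (1 - b) * (q ^ s - a * y)"
    by (simp add: assms [symmetric] algebra_simps)
  have "qpoch (b * q) q s * (1 - a * y) - qpoch (b * q) q (s - 1) * (1 - q ^ s) * (1 - k * y)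
        = qpoch (b * q) q r * ((1 - b * q ^ s) * (1 - a * y) - (1 - q ^ s) * (1 - k * y))"
    by (simp add: Suc qpoch_Suc algebra_simps)
  also have "\<dots> = qpoch (b * q) q r * ((1 - b) * (q ^ s - a * y))"
    by (simp only: key)
  also have "\<dots> = qpoch b q s * (q ^ s - a * y)"
    by (simp add: Suc qpoch_Suc_shift [of b])
  finally show ?thesis .
qed simp

lemma wp_tail_diff:
  assumes "q \<noteq> 0" "a \<noteq> 0"
    and qq: "\<And>m. qpoch q q m \<noteq> 0" and aq: "\<And>m. qpoch (a * q) q m \<noteq> 0"
    and "j < n"
  shows "wp_tail a k q n j - wp_tail a k q n (Suc j)
         = q ^ n * (wp_coeff a k q n (Suc j) * (inverse (q ^ Suc j) - a * q ^ Suc j))"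
proof -
  obtain s where s: "n - j = Suc s" using \<open>j < n\<close> by (metis Suc_diff_Suc)
  define t where "t = n + j"
  have idx: "n - j - 1 = s" "n - Suc j = s" "n - Suc j - 1 = s - 1" "n + j = t" "n + Suc j = Suc t"
    using s by (simp_all add: t_def)
  have n: "n = Suc j + s" using s by simp
  have "q ^ n = q ^ Suc j * q ^ s" unfolding n by (rule power_add)
  then have x: "q ^ n * inverse (q ^ Suc j) = q ^ s" using \<open>q \<noteq> 0\<close> by (simp add: field_simps)
  have y: "q ^ n * q ^ Suc j = q ^ Suc t"
    unfolding t_def by (metis add_Suc_right power_add)
  have alpha: "q ^ n * (inverse (q ^ Suc j) - a * q ^ Suc j) = q ^ s - a * q ^ Suc t"
    by (metis x y right_diff_distrib mult.left_commute)
  have d1: "1 - q * q ^ s \<noteq> 0" using qq [of "Suc s"] by (simp add: qpoch_Suc)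
  have d2: "1 - a * q * q ^ t \<noteq> 0" using aq [of "Suc t"] by (simp add: qpoch_Suc)
  define R where "R = qpoch k q t * (1 - k * q ^ t) / (qpoch q q s * qpoch (a * q) q (Suc t))"
  have tail_j: "wp_tail a k q n j = R * (qpoch (k / a * q) q s * (1 - a * q ^ Suc t))"
    using d1 d2 unfolding wp_tail_def R_def idx s qpoch_Suc by (simp add: ac_simps)
  have tail_Suc_j: "wp_tail a k q n (Suc j)
      = R * (qpoch (k / a * q) q (s - 1) * (1 - q ^ s) * (1 - k * q ^ Suc t))"
    unfolding wp_tail_def R_def idx by (simp add: qpoch_Suc field_simps)
  have term_Suc_j: "q ^ n * (wp_coeff a k q n (Suc j) * (inverse (q ^ Suc j) - a * q ^ Suc j))
      = R * (qpoch (k / a) q s * (q ^ s - a * q ^ Suc t))"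
    unfolding mult.left_commute [of "q ^ n"] alpha
    unfolding wp_coeff_def R_def idx qpoch_Suc by (simp add: ac_simps)
  have ak: "a * (k / a) = k" using \<open>a \<noteq> 0\<close> by simp
  have "wp_tail a k q n j - wp_tail a k q n (Suc j)
      = R * (qpoch (k / a * q) q s * (1 - a * q ^ Suc t)
             - qpoch (k / a * q) q (s - 1) * (1 - q ^ s) * (1 - k * q ^ Suc t))"
    unfolding tail_j tail_Suc_j by (simp only: right_diff_distrib)
  also have "\<dots> = R * (qpoch (k / a) q s * (q ^ s - a * q ^ Suc t))"
    unfolding qpoch_tail_identity [OF ak] ..
  finally show ?thesis
    unfolding term_Suc_j .
qed

lemma wp_tail_telescope:
  assumes "q \<noteq> 0" "a \<noteq> 0" "\<And>m. qpoch q q m \<noteq> 0" "\<And>m. qpoch (a * q) q m \<noteq> 0"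
  shows "q ^ n * (\<Sum>j<n. wp_coeff a k q n (Suc j) * (inverse (q ^ Suc j) - a * q ^ Suc j))
         = wp_tail a k q n 0"
proof -
  have "q ^ n * (\<Sum>j<n. wp_coeff a k q n (Suc j) * (inverse (q ^ Suc j) - a * q ^ Suc j))
        = (\<Sum>j<n. wp_tail a k q n j - wp_tail a k q n (Suc j))"
    unfolding sum_distrib_left by (rule sum.cong) (simp_all add: wp_tail_diff [OF assms])
  then show ?thesis
    by (simp add: sum_lessThan_telescope')
qed

lemma wp_sum_closed_form:
  assumes "q \<noteq> 0" "a \<noteq> 0" "\<And>m. qpoch q q m \<noteq> 0" "\<And>m. qpoch (a * q) q m \<noteq> 0"
    and "n \<ge> 1"
  shows "(\<Sum>j\<le>n. wp_coeff a k q n j * (if j = 0 then 1 else inverse (q ^ j) - a * q ^ j))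
         = qpoch (k / a * q) q (n - 1) * qpoch k q n * ((1 - k / a) * q ^ n + (1 - k * q ^ n) * (1 - q ^ n))
           / (q ^ n * qpoch q q n * qpoch (a * q) q n)"
proof -
  have "(\<Sum>j\<le>n. wp_coeff a k q n j * (if j = 0 then 1 else inverse (q ^ j) - a * q ^ j))
        = wp_coeff a k q n 0 + wp_tail a k q n 0 / q ^ n"
    using wp_tail_telescope [OF assms(1-4), of n k] \<open>q \<noteq> 0\<close>
    by (simp add: sum.atMost_shift nonzero_eq_divide_eq mult.commute)
  also have "wp_coeff a k q n 0
      = (1 - k / a) * qpoch (k / a * q) q (n - 1) * qpoch k q n / (qpoch q q n * qpoch (a * q) q n)"
    by (simp add: wp_coeff_def qpoch_shift_pred [OF \<open>n \<ge> 1\<close>])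
  also have "wp_tail a k q n 0
      = qpoch (k / a * q) q (n - 1) * qpoch k q n * (1 - k * q ^ n) * (1 - q ^ n)
        / (qpoch q q n * qpoch (a * q) q n)"
    by (simp add: wp_tail_def)
  also have "(1 - k / a) * qpoch (k / a * q) q (n - 1) * qpoch k q n / (qpoch q q n * qpoch (a * q) q n)
      + qpoch (k / a * q) q (n - 1) * qpoch k q n * (1 - k * q ^ n) * (1 - q ^ n)
        / (qpoch q q n * qpoch (a * q) q n) / q ^ n
      = qpoch (k / a * q) q (n - 1) * qpoch k q n * ((1 - k / a) * q ^ n + (1 - k * q ^ n) * (1 - q ^ n))
        / (q ^ n * qpoch q q n * qpoch (a * q) q n)"
    using assms(1,3,4) by (simp add: field_simps)
  finally show ?thesis .
qed

lemma wp_bailey_pair_qpower_alpha: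
  assumes "q \<noteq> 0" "a \<noteq> 0" "\<And>m. qpoch q q m \<noteq> 0" "\<And>m. qpoch (a * q) q m \<noteq> 0"
    and "\<alpha> 0 = 1" "\<And>n. n \<ge> 1 \<Longrightarrow> \<alpha> n = inverse (q ^ n) - a * q ^ n"
    and "\<beta> 0 = 1"
    and "\<And>n. n \<ge> 1 \<Longrightarrow> \<beta> n = qpoch (k / a * q) q (n - 1) * qpoch k q n
                                    * ((1 - k / a) * q ^ n + (1 - k * q ^ n) * (1 - q ^ n))
                                    / (q ^ n * qpoch q q n * qpoch (a * q) q n)"
  shows "wp_bailey_pair a k q \<alpha> \<beta>"
  unfolding wp_bailey_pair_def
proof (intro conjI allI)
  fix n
  show "\<beta> n = (\<Sum>j\<le>n. qpoch (k / a) q (n - j) * qpoch k q (n + j)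
                        / (qpoch q q (n - j) * qpoch (a * q) q (n + j)) * \<alpha> j)"
  proof (cases "n = 0")
    case False
    then have "(\<Sum>j\<le>n. wp_coeff a k q n j * \<alpha> j)
        = (\<Sum>j\<le>n. wp_coeff a k q n j * (if j = 0 then 1 else inverse (q ^ j) - a * q ^ j))"
      using assms(5,6) by (intro sum.cong) auto
    with False show ?thesis
      using wp_sum_closed_form [OF assms(1-4)] assms(8) by (simp add: wp_coeff_def)
  qed (simp add: assms(5,7))
qed (rule assms(5))

lemma wp_bailey_pair_a_eq_1:
  fixes q k :: complex
  assumes "q \<noteq> 0" and hq: "\<And>m::nat. m \<ge> 1 \<Longrightarrow> q ^ m \<noteq> 1" and "k \<noteq> 1"
  shows "wp_bailey_pair 1 k q
           (\<lambda>n. if n = 0 then 1 else inverse (q ^ n) - q ^ n)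
           (\<lambda>n. if n = 0 then 1 else
                qpoch k q n * qpoch k q n * (1 - 2 * k * q ^ n + k * q ^ (2 * n))
                / ((1 - k) * q ^ n * qpoch q q n * qpoch q q n))"
proof -
  have qq: "qpoch q q m \<noteq> 0" for m
    using qpoch_power_nonzero [OF hq, of 1] by simp
  have "qpoch k q n * qpoch k q n * (1 - 2 * k * q ^ n + k * q ^ (2 * n))
          / ((1 - k) * q ^ n * qpoch q q n * qpoch q q n)
        = qpoch (k / 1 * q) q (n - 1) * qpoch k q n
          * ((1 - k / 1) * q ^ n + (1 - k * q ^ n) * (1 - q ^ n))
          / (q ^ n * qpoch q q n * qpoch (1 * q) q n)" if "n \<ge> 1" for n
  proof -
    have "q ^ (2 * n) = q ^ n * q ^ n" by (simp add: mult_2 power_add)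
    moreover have "(1 - k) * q ^ n + (1 - k * q ^ n) * (1 - q ^ n) = 1 - 2 * k * q ^ n + k * (q ^ n * q ^ n)"
      by (simp add: algebra_simps)
    ultimately show ?thesis
      using qq [of n] assms(1,3)
      by (simp add: qpoch_shift_pred [OF that, of k] divide_simps)
  qed
  then show ?thesis
    using assms(1) qq by (intro wp_bailey_pair_qpower_alpha) simp_all
qed

lemma wp_bailey_pair_a_eq_q:
  fixes q k :: complex
  assumes "q \<noteq> 0" and hq: "\<And>m::nat. m \<ge> 1 \<Longrightarrow> q ^ m \<noteq> 1"
  shows "wp_bailey_pair q k q
           (\<lambda>n. if n = 0 then 1 else inverse (q ^ n) - q ^ (n + 1))
           (\<lambda>n. if n = 0 then 1 else
                qpoch k q n * qpoch k q (n - 1) * (1 - k * q ^ (n - 1) - k * q ^ n + k * q ^ (2 * n))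
                / (q ^ n * qpoch q q n * qpoch (q ^ 2) q n))"
proof -
  have qq: "qpoch q q m \<noteq> 0" and qq2: "qpoch (q * q) q m \<noteq> 0" for m
    using qpoch_power_nonzero [OF hq, of 1] qpoch_power_nonzero [OF hq, of 2]
    by (simp_all add: power2_eq_square)
  have "qpoch k q n * qpoch k q (n - 1) * (1 - k * q ^ (n - 1) - k * q ^ n + k * q ^ (2 * n))
          / (q ^ n * qpoch q q n * qpoch (q ^ 2) q n)
        = qpoch (k / q * q) q (n - 1) * qpoch k q n
          * ((1 - k / q) * q ^ n + (1 - k * q ^ n) * (1 - q ^ n))
          / (q ^ n * qpoch q q n * qpoch (q * q) q n)" if "n \<ge> 1" for n
  proof -
    have qn: "q ^ n = q * q ^ (n - 1)" using that by (cases n) simp_all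
    have "(1 - k / q) * q ^ n + (1 - k * q ^ n) * (1 - q ^ n)
          = 1 - k * q ^ (n - 1) - k * q ^ n + k * q ^ (2 * n)"
      unfolding mult_2 power_add qn using assms(1) by (simp add: algebra_simps)
    moreover have "k / q * q = k" "q ^ 2 = q * q" using assms(1) by (simp_all add: power2_eq_square)
    ultimately show ?thesis
      by (simp add: mult_ac)
  qed
  then show ?thesis
    using assms(1) qq qq2 by (intro wp_bailey_pair_qpower_alpha) simp_all
qed

theorem mainTheorem9:
  fixes q k :: complex
  assumes "q \<noteq> 0" and "\<And>m::nat. m \<ge> 1 \<Longrightarrow> q ^ m \<noteq> 1" and "k \<noteq> 1"
  shows "wp_bailey_pair 1 k q
           (\<lambda>n. if n = 0 then 1 else inverse (q ^ n) - q ^ n)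
           (\<lambda>n. if n = 0 then 1 else
                qpoch k q n * qpoch k q n * (1 - 2 * k * q ^ n + k * q ^ (2 * n))
                / ((1 - k) * q ^ n * qpoch q q n * qpoch q q n))
       \<and> wp_bailey_pair q k q
           (\<lambda>n. if n = 0 then 1 else inverse (q ^ n) - q ^ (n + 1))
           (\<lambda>n. if n = 0 then 1 else
                qpoch k q n * qpoch k q (n - 1) * (1 - k * q ^ (n - 1) - k * q ^ n + k * q ^ (2 * n))
                / (q ^ n * qpoch q q n * qpoch (q ^ 2) q n))"
  using wp_bailey_pair_a_eq_1 [OF assms] wp_bailey_pair_a_eq_q [OF assms(1,2)] ..

end
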